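(* Let $D$ be a small category, $\mathcal F$ a collection of $D$-orbits, and $X$ a $D$-space admitting a (non-relative) $D$-CW structure of type $\mathcal F$. Then $X$ is a $D$-space of type $\mathcal F$.
   Context: A $D$-space is a functor $D\to\mathrm{Top}$; a $D$-orbit is a $D$-space whose colimit is a point. Topological spaces are regarded as constant $D$-spaces. A relative $D$-CW structure of type $\mathcal F$ on $X$ is a sequence $X^{-1}\hookrightarrow X^0\hookrightarrow X^1\hookrightarrow\cdots\hookrightarrow X$ with $X=\operatorname{colim}_i X^i$, such that for each $i\ge 0$, $X^i$ is the pushout of $X^{i-1}\leftarrow S^{i-1}\times A_i\hookrightarrow D^i\times A_i$, where each $A_i$ is a disjoint union of $D$-orbits in $\mathcal F$ (and $S^{-1}=\emptyset$). It is a (non-relative) $D$-CW structure if $X^{-1}$ is the constant empty $D$-space. For $x$ a point of $\operatorname{colim}_D X$, the orbit $O_x$ is the pullback of $X\to\operatorname{colim}_D X$ (constant $D$-space) along $\{x\}\hookrightarrow \operatorname{colim}_D X$. $X$ is of type $\mathcal F$ if $O_x\in\mathcal F$ for every $x\in\operatorname{colim}_D X$ (orbits being considered up to isomorphism). *)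

theory Defs
  imports "HOL-Analysis.Analysis"
begin

record ('o, 'm) cat =
  Ob :: "'o set"
  Ar :: "'m set"
  cdom :: "'m \<Rightarrow> 'o"
  ccod :: "'m \<Rightarrow> 'o"
  ccomp :: "'m \<Rightarrow> 'm \<Rightarrow> 'm"   (* ccomp g f = g o f *)
  cid :: "'o \<Rightarrow> 'm"

definition is_category :: "('o, 'm) cat \<Rightarrow> bool" where
  "is_category C \<longleftrightarrow>
     (\<forall>f\<in>Ar C. cdom C f \<in> Ob C \<and> ccod C f \<in> Ob C) \<and>
     (\<forall>a\<in>Ob C. cid C a \<in> Ar C \<and> cdom C (cid C a) = a \<and> ccod C (cid C a) = a) \<and>
     (\<forall>f\<in>Ar C. \<forall>g\<in>Ar C. ccod C f = cdom C g \<longrightarrow>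
        ccomp C g f \<in> Ar C \<and> cdom C (ccomp C g f) = cdom C f \<and> ccod C (ccomp C g f) = ccod C g) \<and>
     (\<forall>f\<in>Ar C. ccomp C (cid C (ccod C f)) f = f \<and> ccomp C f (cid C (cdom C f)) = f) \<and>
     (\<forall>f\<in>Ar C. \<forall>g\<in>Ar C. \<forall>h\<in>Ar C. ccod C f = cdom C g \<longrightarrow> ccod C g = cdom C h \<longrightarrow>
        ccomp C h (ccomp C g f) = ccomp C (ccomp C h g) f)"

record ('o, 'm, 'a) dsp =
  Sp :: "'o \<Rightarrow> 'a topology"
  Mp :: "'m \<Rightarrow> 'a \<Rightarrow> 'a"

definition is_dspace :: "('o, 'm) cat \<Rightarrow> ('o, 'm, 'a) dsp \<Rightarrow> bool" where
  "is_dspace C X \<longleftrightarrow>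
     (\<forall>f\<in>Ar C. continuous_map (Sp X (cdom C f)) (Sp X (ccod C f)) (Mp X f)) \<and>
     (\<forall>a\<in>Ob C. \<forall>x\<in>topspace (Sp X a). Mp X (cid C a) x = x) \<and>
     (\<forall>f\<in>Ar C. \<forall>g\<in>Ar C. ccod C f = cdom C g \<longrightarrow>
        (\<forall>x\<in>topspace (Sp X (cdom C f)). Mp X (ccomp C g f) x = Mp X g (Mp X f x)))"

text \<open>Natural transformations (maps of D-spaces), given on the carriers only.\<close>
definition is_dmap :: "('o, 'm) cat \<Rightarrow> ('o, 'm, 'a) dsp \<Rightarrow> ('o, 'm, 'b) dsp
    \<Rightarrow> ('o \<Rightarrow> 'a \<Rightarrow> 'b) \<Rightarrow> bool" where
  "is_dmap C X Y \<eta> \<longleftrightarrow>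
     (\<forall>a\<in>Ob C. continuous_map (Sp X a) (Sp Y a) (\<eta> a)) \<and>
     (\<forall>f\<in>Ar C. \<forall>x\<in>topspace (Sp X (cdom C f)).
        \<eta> (ccod C f) (Mp X f x) = Mp Y f (\<eta> (cdom C f) x))"

definition dspace_iso :: "('o, 'm) cat \<Rightarrow> ('o, 'm, 'a) dsp \<Rightarrow> ('o, 'm, 'b) dsp \<Rightarrow> bool" where
  "dspace_iso C X Y \<longleftrightarrow>
     (\<exists>\<eta> \<theta>. is_dmap C X Y \<eta> \<and> is_dmap C Y X \<theta> \<and>
        (\<forall>a\<in>Ob C. \<forall>x\<in>topspace (Sp X a). \<theta> a (\<eta> a x) = x) \<and>
        (\<forall>a\<in>Ob C. \<forall>y\<in>topspace (Sp Y a). \<eta> a (\<theta> a y) = y))"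

text \<open>The colimit of a D-space in Top has as underlying set the disjoint union of the
  spaces X(a) modulo the equivalence relation generated by x ~ X(f)(x).\<close>

definition colim_carrier :: "('o, 'm) cat \<Rightarrow> ('o, 'm, 'a) dsp \<Rightarrow> ('o \<times> 'a) set" where
  "colim_carrier C X = {p. fst p \<in> Ob C \<and> snd p \<in> topspace (Sp X (fst p))}"

definition colim_step :: "('o, 'm) cat \<Rightarrow> ('o, 'm, 'a) dsp \<Rightarrow> 'o \<times> 'a \<Rightarrow> 'o \<times> 'a \<Rightarrow> bool" where
  "colim_step C X p q \<longleftrightarrow>
     (\<exists>f\<in>Ar C. \<exists>x\<in>topspace (Sp X (cdom C f)). p = (cdom C f, x) \<and> q = (ccod C f, Mp X f x))"

definition colim_rel :: "('o, 'm) cat \<Rightarrow> ('o, 'm, 'a) dsp \<Rightarrow> 'o \<times> 'a \<Rightarrow> 'o \<times> 'a \<Rightarrow> bool" where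
  "colim_rel C X = (\<lambda>p q. colim_step C X p q \<or> colim_step C X q p)\<^sup>*\<^sup>*"

definition colim_class :: "('o, 'm) cat \<Rightarrow> ('o, 'm, 'a) dsp \<Rightarrow> 'o \<times> 'a \<Rightarrow> ('o \<times> 'a) set" where
  "colim_class C X p = {q \<in> colim_carrier C X. colim_rel C X p q}"

definition colim_points :: "('o, 'm) cat \<Rightarrow> ('o, 'm, 'a) dsp \<Rightarrow> ('o \<times> 'a) set set" where
  "colim_points C X = colim_class C X ` colim_carrier C X"

text \<open>The orbit O_x: pullback of X \<rightarrow> colim_D X along the point x.\<close>
definition orbit_at :: "('o, 'm) cat \<Rightarrow> ('o, 'm, 'a) dsp \<Rightarrow> ('o \<times> 'a) set \<Rightarrow> ('o, 'm, 'a) dsp" where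
  "orbit_at C X c = \<lparr>Sp = (\<lambda>a. subtopology (Sp X a) {y. (a, y) \<in> c}), Mp = Mp X\<rparr>"

definition is_dorbit :: "('o, 'm) cat \<Rightarrow> ('o, 'm, 'a) dsp \<Rightarrow> bool" where
  "is_dorbit C Orb \<longleftrightarrow> is_dspace C Orb \<and> (\<exists>c. colim_points C Orb = {c})"

definition of_type :: "('o, 'm) cat \<Rightarrow> ('o, 'm, 'e) dsp set \<Rightarrow> ('o, 'm, 'a) dsp \<Rightarrow> bool" where
  "of_type C F X \<longleftrightarrow> (\<forall>c\<in>colim_points C X. \<exists>Orb\<in>F. dspace_iso C (orbit_at C X c) Orb)"

text \<open>D^i and S^(i-1) realised inside nat => real (coordinates >= i vanish),
  with the product (= Euclidean) topology. S^(-1) is empty.\<close>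
definition disc_set :: "nat \<Rightarrow> (nat \<Rightarrow> real) set" where
  "disc_set i = {v. (\<forall>k\<ge>i. v k = 0) \<and> (\<Sum>k<i. (v k)\<^sup>2) \<le> 1}"

definition sphere_set :: "nat \<Rightarrow> (nat \<Rightarrow> real) set" where
  "sphere_set i = {v. (\<forall>k\<ge>i. v k = 0) \<and> (\<Sum>k<i. (v k)\<^sup>2) = 1}"

definition Dtop :: "nat \<Rightarrow> (nat \<Rightarrow> real) topology" where
  "Dtop i = subtopology (product_topology (\<lambda>_. euclideanreal) UNIV) (disc_set i)"

definition Stop :: "nat \<Rightarrow> (nat \<Rightarrow> real) topology" where
  "Stop i = subtopology (product_topology (\<lambda>_. euclideanreal) UNIV) (sphere_set i)"

definition cell_dsp :: "nat \<Rightarrow> ('o, 'm, 'c) dsp \<Rightarrow> ('o, 'm, (nat \<Rightarrow> real) \<times> 'c) dsp" where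
  "cell_dsp i A = \<lparr>Sp = (\<lambda>a. prod_topology (Dtop i) (Sp A a)), Mp = (\<lambda>f (v, x). (v, Mp A f x))\<rparr>"

definition bdry_dsp :: "nat \<Rightarrow> ('o, 'm, 'c) dsp \<Rightarrow> ('o, 'm, (nat \<Rightarrow> real) \<times> 'c) dsp" where
  "bdry_dsp i A = \<lparr>Sp = (\<lambda>a. prod_topology (Stop i) (Sp A a)), Mp = (\<lambda>f (v, x). (v, Mp A f x))\<rparr>"

definition sub_dsp :: "('o, 'm, 'c) dsp \<Rightarrow> 'c set \<Rightarrow> ('o, 'm, 'c) dsp" where
  "sub_dsp A q = \<lparr>Sp = (\<lambda>a. subtopology (Sp A a) q), Mp = Mp A\<rparr>"

text \<open>A is a coproduct (disjoint union) of D-spaces each isomorphic to a member of F: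
  it splits into D-invariant pieces that are open in every A(a).\<close>
definition is_orbit_coproduct :: "('o, 'm) cat \<Rightarrow> ('o, 'm, 'e) dsp set \<Rightarrow> ('o, 'm, 'c) dsp \<Rightarrow> bool" where
  "is_orbit_coproduct C F A \<longleftrightarrow>
     (\<exists>Q. (\<forall>q\<in>Q. \<forall>q'\<in>Q. q \<noteq> q' \<longrightarrow> q \<inter> q' = {}) \<and>
          (\<forall>a\<in>Ob C. topspace (Sp A a) \<subseteq> \<Union>Q) \<and>
          (\<forall>q\<in>Q. \<forall>a\<in>Ob C. openin (Sp A a) (topspace (Sp A a) \<inter> q)) \<and>
          (\<forall>q\<in>Q. \<forall>f\<in>Ar C. \<forall>x\<in>topspace (Sp A (cdom C f)) \<inter> q. Mp A f x \<in> q) \<and>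
          (\<forall>q\<in>Q. \<exists>Orb\<in>F. dspace_iso C (sub_dsp A q) Orb))"

text \<open>X is (objectwise, hence in D-spaces) the pushout of Y <- S^(i-1) x A -> D^i x A,
  with structure maps j : Y -> X and Phi : D^i x A -> X.\<close>
definition is_cell_pushout :: "('o, 'm) cat \<Rightarrow> nat \<Rightarrow> ('o, 'm, 'c) dsp \<Rightarrow> ('o, 'm, 'b) dsp
    \<Rightarrow> ('o, 'm, 'b) dsp \<Rightarrow> ('o \<Rightarrow> 'b \<Rightarrow> 'b) \<Rightarrow> ('o \<Rightarrow> (nat \<Rightarrow> real) \<times> 'c \<Rightarrow> 'b) \<Rightarrow> bool" where
  "is_cell_pushout C i A Y X j \<Phi> \<longleftrightarrow>
     is_dmap C Y X j \<and> is_dmap C (cell_dsp i A) X \<Phi> \<and>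
     (\<exists>\<phi>. is_dmap C (bdry_dsp i A) Y \<phi> \<and>
        (\<forall>a\<in>Ob C. \<forall>p\<in>topspace (Sp (bdry_dsp i A) a). \<Phi> a p = j a (\<phi> a p))) \<and>
     (\<forall>a\<in>Ob C.
        inj_on (j a) (topspace (Sp Y a)) \<and>
        inj_on (\<Phi> a) (topspace (Sp (cell_dsp i A) a) - topspace (Sp (bdry_dsp i A) a)) \<and>
        j a ` topspace (Sp Y a) \<inter>
          \<Phi> a ` (topspace (Sp (cell_dsp i A) a) - topspace (Sp (bdry_dsp i A) a)) = {} \<and>
        topspace (Sp X a) = j a ` topspace (Sp Y a) \<union>
          \<Phi> a ` (topspace (Sp (cell_dsp i A) a) - topspace (Sp (bdry_dsp i A) a)) \<and>
        (\<forall>U. U \<subseteq> topspace (Sp X a) \<longrightarrow>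
           (openin (Sp X a) U \<longleftrightarrow>
              openin (Sp Y a) {y \<in> topspace (Sp Y a). j a y \<in> U} \<and>
              openin (Sp (cell_dsp i A) a) {p \<in> topspace (Sp (cell_dsp i A) a). \<Phi> a p \<in> U})))"

definition is_seq_colim :: "('o, 'm) cat \<Rightarrow> (nat \<Rightarrow> ('o, 'm, 'b) dsp) \<Rightarrow> (nat \<Rightarrow> 'o \<Rightarrow> 'b \<Rightarrow> 'b)
    \<Rightarrow> ('o, 'm, 'a) dsp \<Rightarrow> (nat \<Rightarrow> 'o \<Rightarrow> 'b \<Rightarrow> 'a) \<Rightarrow> bool" where
  "is_seq_colim C Xs js X \<iota>s \<longleftrightarrow>
     (\<forall>i. is_dmap C (Xs i) X (\<iota>s i) \<and>
          (\<forall>a\<in>Ob C. \<forall>x\<in>topspace (Sp (Xs i) a). \<iota>s (Suc i) a (js i a x) = \<iota>s i a x) \<and>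
          (\<forall>a\<in>Ob C. inj_on (\<iota>s i a) (topspace (Sp (Xs i) a)))) \<and>
     (\<forall>a\<in>Ob C. topspace (Sp X a) = (\<Union>i. \<iota>s i a ` topspace (Sp (Xs i) a))) \<and>
     (\<forall>a\<in>Ob C. \<forall>U. U \<subseteq> topspace (Sp X a) \<longrightarrow>
        (openin (Sp X a) U \<longleftrightarrow>
           (\<forall>i. openin (Sp (Xs i) a) {x \<in> topspace (Sp (Xs i) a). \<iota>s i a x \<in> U})))"

text \<open>Relative D-CW structure of type F on X. Indexing: Xs 0 = X^(-1), Xs (Suc i) = X^i,
  As i = A_i (the i-cells), js i : X^(i-1) -> X^i, \<Phi>s i the characteristic map.\<close>
definition cw_structure :: "('o, 'm) cat \<Rightarrow> ('o, 'm, 'e) dsp set \<Rightarrow> ('o, 'm, 'a) dsp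
    \<Rightarrow> (nat \<Rightarrow> ('o, 'm, 'b) dsp) \<Rightarrow> (nat \<Rightarrow> 'o \<Rightarrow> 'b \<Rightarrow> 'b)
    \<Rightarrow> (nat \<Rightarrow> ('o, 'm, 'c) dsp) \<Rightarrow> (nat \<Rightarrow> 'o \<Rightarrow> (nat \<Rightarrow> real) \<times> 'c \<Rightarrow> 'b)
    \<Rightarrow> (nat \<Rightarrow> 'o \<Rightarrow> 'b \<Rightarrow> 'a) \<Rightarrow> bool" where
  "cw_structure C F X Xs js As \<Phi>s \<iota>s \<longleftrightarrow>
     (\<forall>i. is_dspace C (Xs i) \<and> is_dspace C (As i) \<and> is_orbit_coproduct C F (As i) \<and>
          is_cell_pushout C i (As i) (Xs i) (Xs (Suc i)) (js i) (\<Phi>s i)) \<and>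
     is_seq_colim C Xs js X \<iota>s"

text \<open>Non-relative: X^(-1) is the constant empty D-space.\<close>
definition dcw_structure where
  "dcw_structure C F X Xs js As \<Phi>s \<iota>s \<longleftrightarrow>
     cw_structure C F X Xs js As \<Phi>s \<iota>s \<and> (\<forall>a\<in>Ob C. topspace (Sp (Xs 0) a) = {})"

end

(*
  Every point x of X lies in exactly one open cell: x = \<iota>(\<Phi>_k(w, z)) for a unique k, a unique
  interior point w of D^k and a unique z \<in> A_k. Fixing k and w, the map z \<mapsto> \<iota>(\<Phi>_k(w, z))
  is a natural closed embedding of A_k into X, because images of closed sets stay closed
  along the cell attachments and in the colimit. The component q of A_k containing z is a
  D-orbit, so all its points are identified in colim_D A_k, and hence their images are
  identified in colim_D X. Conversely, a point of X identified with x is reached by a zigzag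
  of structure maps; since open cells are preserved and reflected by the maps X(f), and q is
  a union of whole orbits, the zigzag never leaves the image of q. So the orbit O_x is the
  image of q, and the embedding makes O_x isomorphic to q, which lies in F.
*)

theory Submission
  imports Defs
begin

lemma is_category_dom_cod:
  assumes "is_category C" "f \<in> Ar C"
  shows "cdom C f \<in> Ob C" "ccod C f \<in> Ob C"
  using assms unfolding is_category_def by auto

lemma is_dspace_Mp_in:
  assumes "is_dspace C Y" "f \<in> Ar C" "x \<in> topspace (Sp Y (cdom C f))"
  shows "Mp Y f x \<in> topspace (Sp Y (ccod C f))"
  using assms unfolding is_dspace_def by (meson continuous_map_image_subset_topspace image_subset_iff)

lemma is_dmap_continuous:
  "is_dmap C Y Z h \<Longrightarrow> a \<in> Ob C \<Longrightarrow> continuous_map (Sp Y a) (Sp Z a) (h a)"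
  unfolding is_dmap_def by blast

lemma is_dmap_natural:
  "is_dmap C Y Z h \<Longrightarrow> f \<in> Ar C \<Longrightarrow> x \<in> topspace (Sp Y (cdom C f))
    \<Longrightarrow> h (ccod C f) (Mp Y f x) = Mp Z f (h (cdom C f) x)"
  unfolding is_dmap_def by blast

lemma is_dmap_in:
  "is_dmap C Y Z h \<Longrightarrow> a \<in> Ob C \<Longrightarrow> x \<in> topspace (Sp Y a) \<Longrightarrow> h a x \<in> topspace (Sp Z a)"
  by (meson is_dmap_continuous continuous_map_image_subset_topspace image_subset_iff)

lemma is_dmap_comp:
  assumes "is_category C" "is_dmap C X Y g" "is_dmap C Y Z h"
  shows "is_dmap C X Z (\<lambda>a x. h a (g a x))"
  unfolding is_dmap_def
proof (intro conjI ballI)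
  fix a assume "a \<in> Ob C"
  then show "continuous_map (Sp X a) (Sp Z a) (\<lambda>x. h a (g a x))"
    using continuous_map_compose[OF is_dmap_continuous[OF assms(2)] is_dmap_continuous[OF assms(3)]]
    by (simp add: o_def)
next
  fix f x assume "f \<in> Ar C" "x \<in> topspace (Sp X (cdom C f))"
  then show "h (ccod C f) (g (ccod C f) (Mp X f x)) = Mp Z f (h (cdom C f) (g (cdom C f) x))"
    using assms is_dmap_natural is_dmap_in is_category_dom_cod by metis
qed

lemma is_dmap_sub_dsp: "is_dmap C A Z h \<Longrightarrow> is_dmap C (sub_dsp A q) Z h"
  unfolding is_dmap_def sub_dsp_def by (simp add: continuous_map_from_subtopology)

lemma is_dspace_sub_dsp:
  assumes "is_dspace C A"
    and "\<forall>f\<in>Ar C. \<forall>x\<in>topspace (Sp A (cdom C f)) \<inter> q. Mp A f x \<in> q"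
  shows "is_dspace C (sub_dsp A q)"
  unfolding is_dspace_def sub_dsp_def
proof (simp, intro conjI ballI)
  fix f assume f: "f \<in> Ar C"
  have "Mp A f ` (topspace (Sp A (cdom C f)) \<inter> q) \<subseteq> q"
    using assms(2) f by blast
  moreover have "continuous_map (Sp A (cdom C f)) (Sp A (ccod C f)) (Mp A f)"
    using assms(1) f unfolding is_dspace_def by blast
  ultimately show "continuous_map (subtopology (Sp A (cdom C f)) q) (subtopology (Sp A (ccod C f)) q) (Mp A f)"
    by (intro continuous_map_into_subtopology continuous_map_from_subtopology) auto
qed (use assms(1) in \<open>auto simp: is_dspace_def\<close>)

lemma dspace_iso_trans:
  assumes "is_category C" "dspace_iso C X Y" "dspace_iso C Y Z"
  shows "dspace_iso C X Z"
proof -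
  obtain g g' where g: "is_dmap C X Y g" "is_dmap C Y X g'"
    "\<forall>a\<in>Ob C. \<forall>x\<in>topspace (Sp X a). g' a (g a x) = x"
    "\<forall>a\<in>Ob C. \<forall>y\<in>topspace (Sp Y a). g a (g' a y) = y"
    using assms(2) unfolding dspace_iso_def by blast
  obtain h h' where h: "is_dmap C Y Z h" "is_dmap C Z Y h'"
    "\<forall>a\<in>Ob C. \<forall>y\<in>topspace (Sp Y a). h' a (h a y) = y"
    "\<forall>a\<in>Ob C. \<forall>z\<in>topspace (Sp Z a). h a (h' a z) = z"
    using assms(3) unfolding dspace_iso_def by blast
  show ?thesis
    unfolding dspace_iso_def
    by (intro exI[of _ "\<lambda>a x. h a (g a x)"] exI[of _ "\<lambda>a z. g' a (h' a z)"] conjI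
        is_dmap_comp[OF assms(1) g(1) h(1)] is_dmap_comp[OF assms(1) h(2) g(2)])
      (simp_all add: g h is_dmap_in[OF g(1)] is_dmap_in[OF h(2)])
qed

lemma dspace_iso_if_homeomorphic_map:
  assumes cat: "is_category C" and S: "is_dspace C S" and \<eta>: "is_dmap C S Y \<eta>"
    and homeo: "\<forall>b\<in>Ob C. homeomorphic_map (Sp S b) (Sp Y b) (\<eta> b)"
  shows "dspace_iso C Y S"
proof -
  have "\<forall>b\<in>Ob C. \<exists>\<theta>. homeomorphic_maps (Sp S b) (Sp Y b) (\<eta> b) \<theta>"
    using homeo homeomorphic_map_maps by blast
  then obtain \<theta> where \<theta>: "\<forall>b\<in>Ob C. homeomorphic_maps (Sp S b) (Sp Y b) (\<eta> b) (\<theta> b)"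
    by (rule bchoice[THEN exE])
  then have \<theta>\<eta>: "\<theta> b (\<eta> b x) = x" if "b \<in> Ob C" "x \<in> topspace (Sp S b)" for b x
    using that unfolding homeomorphic_maps_def by blast
  have \<eta>\<theta>: "\<eta> b (\<theta> b y) = y" "\<theta> b y \<in> topspace (Sp S b)"
    if "b \<in> Ob C" "y \<in> topspace (Sp Y b)" for b y
    using \<theta> that unfolding homeomorphic_maps_def by (auto dest!: continuous_map_funspace)
  have "is_dmap C Y S \<theta>"
    unfolding is_dmap_def
  proof (intro conjI ballI)
    show "continuous_map (Sp Y b) (Sp S b) (\<theta> b)" if "b \<in> Ob C" for b
      using \<theta> that unfolding homeomorphic_maps_def by blast
  next
    fix f y assume f: "f \<in> Ar C" and y: "y \<in> topspace (Sp Y (cdom C f))"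
    note ob = is_category_dom_cod[OF cat f]
    have "Mp Y f y = \<eta> (ccod C f) (Mp S f (\<theta> (cdom C f) y))"
      using is_dmap_natural[OF \<eta> f \<eta>\<theta>(2)[OF ob(1) y]] \<eta>\<theta>(1)[OF ob(1) y] by simp
    then show "\<theta> (ccod C f) (Mp Y f y) = Mp S f (\<theta> (cdom C f) y)"
      using \<theta>\<eta>[OF ob(2)] is_dspace_Mp_in[OF S f \<eta>\<theta>(2)[OF ob(1) y]] by simp
  qed
  then show ?thesis
    unfolding dspace_iso_def using \<eta> \<theta>\<eta> \<eta>\<theta> by blast
qed

section \<open>Points of the colimit\<close>

lemma colim_step_dmap:
  assumes "is_category C" "is_dmap C Y Z h" "colim_step C Y (a, x) (b, y)"
  shows "colim_step C Z (a, h a x) (b, h b y)"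
proof -
  obtain f where f: "f \<in> Ar C" "x \<in> topspace (Sp Y (cdom C f))"
    and ab: "a = cdom C f" "b = ccod C f" "y = Mp Y f x"
    using assms(3) unfolding colim_step_def by blast
  then have "h a x \<in> topspace (Sp Z (cdom C f))" "h b y = Mp Z f (h a x)"
    using is_dmap_in[OF assms(2) is_category_dom_cod(1)[OF assms(1)]] is_dmap_natural[OF assms(2)]
    by simp_all
  then show ?thesis
    unfolding colim_step_def using f ab by blast
qed

lemma colim_rel_dmap:
  assumes "is_category C" "is_dmap C Y Z h" "colim_rel C Y (a, x) (b, y)"
  shows "colim_rel C Z (a, h a x) (b, h b y)"
  using assms(3) unfolding colim_rel_def
proof (induction rule: rtranclp_induct2)
  case (step b y b' y')
  then have "colim_step C Z (b, h b y) (b', h b' y') \<or> colim_step C Z (b', h b' y') (b, h b y)"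
    using colim_step_dmap[OF assms(1,2)] by blast
  then show ?case
    by (intro rtranclp.rtrancl_into_rtrancl[OF step.IH]) simp
qed simp

lemma colim_rel_if_iso_dorbit:
  assumes cat: "is_category C" and orb: "is_dorbit C Orb" and iso: "dspace_iso C S Orb"
    and p: "(a, x) \<in> colim_carrier C S" and q: "(b, y) \<in> colim_carrier C S"
  shows "colim_rel C S (a, x) (b, y)"
proof -
  obtain \<eta> \<theta> where \<eta>: "is_dmap C S Orb \<eta>" and \<theta>: "is_dmap C Orb S \<theta>"
    and inv: "\<forall>a\<in>Ob C. \<forall>x\<in>topspace (Sp S a). \<theta> a (\<eta> a x) = x"
    using iso unfolding dspace_iso_def by blast
  obtain c where c: "colim_points C Orb = {c}"
    using orb unfolding is_dorbit_def by blast
  have "(a, \<eta> a x) \<in> colim_carrier C Orb" "(b, \<eta> b y) \<in> colim_carrier C Orb"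
    using p q is_dmap_in[OF \<eta>] unfolding colim_carrier_def by auto
  then have "colim_class C Orb (a, \<eta> a x) = colim_class C Orb (b, \<eta> b y)"
    using c unfolding colim_points_def by blast
  moreover have "(b, \<eta> b y) \<in> colim_class C Orb (b, \<eta> b y)"
    using \<open>(b, \<eta> b y) \<in> colim_carrier C Orb\<close> unfolding colim_class_def colim_rel_def by simp
  ultimately have "colim_rel C Orb (a, \<eta> a x) (b, \<eta> b y)"
    unfolding colim_class_def by blast
  from colim_rel_dmap[OF cat \<theta> this] show ?thesis
    using p q inv unfolding colim_carrier_def by simp
qed

lemma orbit_coproduct_component:
  assumes cat: "is_category C" and A: "is_orbit_coproduct C F A"
    and a: "a \<in> Ob C" and z: "z \<in> topspace (Sp A a)"
  obtains q Orb where "z \<in> q" "Orb \<in> F" "dspace_iso C (sub_dsp A q) Orb"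
    "\<And>f u. f \<in> Ar C \<Longrightarrow> u \<in> topspace (Sp A (cdom C f)) \<Longrightarrow> Mp A f u \<in> q \<longleftrightarrow> u \<in> q"
proof -
  obtain Q where disj: "\<forall>q\<in>Q. \<forall>q'\<in>Q. q \<noteq> q' \<longrightarrow> q \<inter> q' = {}"
    and cover: "\<forall>a\<in>Ob C. topspace (Sp A a) \<subseteq> \<Union>Q"
    and inv: "\<forall>q\<in>Q. \<forall>f\<in>Ar C. \<forall>x\<in>topspace (Sp A (cdom C f)) \<inter> q. Mp A f x \<in> q"
    and orbs: "\<forall>q\<in>Q. \<exists>Orb\<in>F. dspace_iso C (sub_dsp A q) Orb"
    using A unfolding is_orbit_coproduct_def by - (elim exE conjE, rule that)
  obtain q where q: "q \<in> Q" "z \<in> q"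
    using cover a z by blast
  obtain Orb where Orb: "Orb \<in> F" "dspace_iso C (sub_dsp A q) Orb"
    using orbs q by blast
  have "Mp A f u \<in> q \<longleftrightarrow> u \<in> q" if f: "f \<in> Ar C" and u: "u \<in> topspace (Sp A (cdom C f))" for f u
  proof -
    obtain q' where "q' \<in> Q" "u \<in> q'"
      using cover is_category_dom_cod[OF cat f] u by blast
    then show ?thesis
      using disj inv q(1) f u by blast
  qed
  then show ?thesis
    using that[OF q(2) Orb] by blast
qed

lemma topspace_Dtop [simp]: "topspace (Dtop i) = disc_set i"
  unfolding Dtop_def by simp

lemma topspace_Stop [simp]: "topspace (Stop i) = sphere_set i"
  unfolding Stop_def by simp

lemma topspace_cell_dsp [simp]: "topspace (Sp (cell_dsp i A) a) = disc_set i \<times> topspace (Sp A a)"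
  by (simp add: cell_dsp_def)

lemma topspace_bdry_dsp [simp]: "topspace (Sp (bdry_dsp i A) a) = sphere_set i \<times> topspace (Sp A a)"
  by (simp add: bdry_dsp_def)

lemma sphere_subset_disc: "sphere_set i \<subseteq> disc_set i"
  unfolding sphere_set_def disc_set_def by auto

lemma closedin_sphere_set: "closedin (product_topology (\<lambda>_. euclideanreal) UNIV) (sphere_set i)"
proof -
  let ?P = "product_topology (\<lambda>_::nat. euclideanreal) UNIV"
  have norm: "closedin ?P {v \<in> topspace ?P. (\<Sum>k<i. (v k)\<^sup>2) \<in> {1}}"
    by (intro closedin_continuous_map_preimage[where Y=euclideanreal] continuous_map_sum
        continuous_map_real_pow continuous_map_product_projection) auto
  have coord: "closedin ?P {v \<in> topspace ?P. v k \<in> {0}}" for k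
    by (intro closedin_continuous_map_preimage[where Y=euclideanreal]
        continuous_map_product_projection) auto
  have "closedin ?P (\<Inter>k\<in>{i..}. {v \<in> topspace ?P. v k \<in> {0}})"
    by (rule closedin_Inter) (use coord in auto)
  moreover have "sphere_set i = (\<Inter>k\<in>{i..}. {v \<in> topspace ?P. v k \<in> {0}})
      \<inter> {v \<in> topspace ?P. (\<Sum>k<i. (v k)\<^sup>2) \<in> {1}}"
    unfolding sphere_set_def by auto
  ultimately show ?thesis
    using norm by (simp add: closedin_Int)
qed

lemma closedin_bdry_dsp_cell_dsp:
  assumes "closedin (Sp (bdry_dsp i A) a) S"
  shows "closedin (Sp (cell_dsp i A) a) S"
proof -
  have "Stop i = subtopology (Dtop i) (sphere_set i)"
    unfolding Stop_def Dtop_def subtopology_subtopology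
    using sphere_subset_disc by (metis inf.absorb_iff2)
  then have "Sp (bdry_dsp i A) a = subtopology (Sp (cell_dsp i A) a) (sphere_set i \<times> topspace (Sp A a))"
    by (simp add: bdry_dsp_def cell_dsp_def subtopology_Times)
  moreover have "closedin (Sp (cell_dsp i A) a) (sphere_set i \<times> topspace (Sp A a))"
    using closedin_sphere_set sphere_subset_disc
    by (simp add: cell_dsp_def closedin_prod_Times_iff Dtop_def closedin_subtopology) blast
  ultimately show ?thesis
    using assms closedin_trans_full by metis
qed

lemma closedin_cell_dsp_slice:
  assumes "w \<in> disc_set i" "closedin (Sp A a) K"
  shows "closedin (Sp (cell_dsp i A) a) ({w} \<times> K)"
proof -
  have "Hausdorff_space (Dtop i)"
    unfolding Dtop_def by (simp add: Hausdorff_space_subtopology Hausdorff_space_product_topology)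
  then show ?thesis
    using assms by (simp add: cell_dsp_def closedin_prod_Times_iff closedin_Hausdorff_singleton)
qed

lemma is_dmap_cell_dsp_slice:
  assumes "w \<in> disc_set i"
  shows "is_dmap C A (cell_dsp i A) (\<lambda>_ z. (w, z))"
  using assms unfolding is_dmap_def cell_dsp_def
  by (auto intro!: continuous_map_pairedI)

section \<open>Attaching cells\<close>

locale cell_pushout =
  fixes C :: "('o, 'm) cat" and i :: nat and A :: "('o, 'm, 'c) dsp"
    and Y X :: "('o, 'm, 'b) dsp" and j :: "'o \<Rightarrow> 'b \<Rightarrow> 'b"
    and \<Phi> :: "'o \<Rightarrow> (nat \<Rightarrow> real) \<times> 'c \<Rightarrow> 'b"
  assumes pushout: "is_cell_pushout C i A Y X j \<Phi>"
begin

lemma j_dmap: "is_dmap C Y X j"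
  and \<Phi>_dmap: "is_dmap C (cell_dsp i A) X \<Phi>"
  using pushout unfolding is_cell_pushout_def by blast+

lemma obtain_attaching_map:
  obtains \<phi> where "is_dmap C (bdry_dsp i A) Y \<phi>"
    "\<And>a p. a \<in> Ob C \<Longrightarrow> p \<in> sphere_set i \<times> topspace (Sp A a) \<Longrightarrow> \<Phi> a p = j a (\<phi> a p)"
  using pushout unfolding is_cell_pushout_def by auto

lemma
  assumes "a \<in> Ob C"
  shows inj_on_j: "inj_on (j a) (topspace (Sp Y a))"
    and inj_on_\<Phi>: "inj_on (\<Phi> a) ((disc_set i - sphere_set i) \<times> topspace (Sp A a))"
    and j_\<Phi>_disjoint:
      "j a ` topspace (Sp Y a) \<inter> \<Phi> a ` ((disc_set i - sphere_set i) \<times> topspace (Sp A a)) = {}"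
    and topspace_pushout: "topspace (Sp X a) =
      j a ` topspace (Sp Y a) \<union> \<Phi> a ` ((disc_set i - sphere_set i) \<times> topspace (Sp A a))"
    and openin_pushout_iff: "\<And>U. U \<subseteq> topspace (Sp X a) \<Longrightarrow> openin (Sp X a) U \<longleftrightarrow>
      openin (Sp Y a) {y \<in> topspace (Sp Y a). j a y \<in> U} \<and>
      openin (Sp (cell_dsp i A) a) {p \<in> topspace (Sp (cell_dsp i A) a). \<Phi> a p \<in> U}"
  using pushout assms unfolding is_cell_pushout_def by (simp_all add: Times_Diff_distrib1)

lemma closedin_pushoutI:
  assumes a: "a \<in> Ob C" and K: "K \<subseteq> topspace (Sp X a)"
    and "closedin (Sp Y a) {y \<in> topspace (Sp Y a). j a y \<in> K}"
    and "closedin (Sp (cell_dsp i A) a) {p \<in> topspace (Sp (cell_dsp i A) a). \<Phi> a p \<in> K}"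
  shows "closedin (Sp X a) K"
proof -
  have "{y \<in> topspace (Sp Y a). j a y \<in> topspace (Sp X a) - K}
      = topspace (Sp Y a) - {y \<in> topspace (Sp Y a). j a y \<in> K}"
    using is_dmap_in[OF j_dmap a] by auto
  moreover have "{p \<in> topspace (Sp (cell_dsp i A) a). \<Phi> a p \<in> topspace (Sp X a) - K}
      = topspace (Sp (cell_dsp i A) a) - {p \<in> topspace (Sp (cell_dsp i A) a). \<Phi> a p \<in> K}"
    using is_dmap_in[OF \<Phi>_dmap a] by auto
  ultimately have "openin (Sp X a) (topspace (Sp X a) - K)"
    using openin_pushout_iff[OF a] assms(3,4) unfolding closedin_def by auto
  then show ?thesis
    using K unfolding closedin_def by blast
qed

lemma closedin_image_j:
  assumes a: "a \<in> Ob C" and K: "closedin (Sp Y a) K"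
  shows "closedin (Sp X a) (j a ` K)"
proof -
  obtain \<phi> where \<phi>: "is_dmap C (bdry_dsp i A) Y \<phi>"
    and \<Phi>\<phi>: "\<And>p. p \<in> sphere_set i \<times> topspace (Sp A a) \<Longrightarrow> \<Phi> a p = j a (\<phi> a p)"
    using obtain_attaching_map a by metis
  have KY: "K \<subseteq> topspace (Sp Y a)"
    using closedin_subset[OF K] .
  \<comment> \<open>On the boundary \<open>\<Phi>\<close> factors through j, and the open cell misses the image of j.\<close>
  have pre_eq: "{p \<in> topspace (Sp (cell_dsp i A) a). \<Phi> a p \<in> j a ` K}
      = {p \<in> topspace (Sp (bdry_dsp i A) a). \<phi> a p \<in> K}"
  proof (intro set_eqI iffI)
    fix p assume p: "p \<in> {p \<in> topspace (Sp (cell_dsp i A) a). \<Phi> a p \<in> j a ` K}"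
    show "p \<in> {p \<in> topspace (Sp (bdry_dsp i A) a). \<phi> a p \<in> K}"
    proof (cases "p \<in> sphere_set i \<times> topspace (Sp A a)")
      case True
      then have "\<phi> a p \<in> topspace (Sp Y a)"
        using is_dmap_in[OF \<phi> a] by simp
      then have "\<phi> a p \<in> K"
        using True p \<Phi>\<phi> inj_on_image_mem_iff[OF inj_on_j[OF a] _ KY] by simp
      then show ?thesis
        using True by simp
    next
      case False
      then have "\<Phi> a p \<in> \<Phi> a ` ((disc_set i - sphere_set i) \<times> topspace (Sp A a))"
        using p by auto
      moreover have "\<Phi> a p \<in> j a ` topspace (Sp Y a)"
        using p KY by blast
      ultimately show ?thesis
        using j_\<Phi>_disjoint[OF a] by blast
    qed
  qed (use \<Phi>\<phi> sphere_subset_disc in auto)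
  have pre_\<Phi>: "closedin (Sp (cell_dsp i A) a) {p \<in> topspace (Sp (cell_dsp i A) a). \<Phi> a p \<in> j a ` K}"
    unfolding pre_eq
    by (rule closedin_bdry_dsp_cell_dsp closedin_continuous_map_preimage[OF is_dmap_continuous[OF \<phi> a] K])+
  have pre_j: "{y \<in> topspace (Sp Y a). j a y \<in> j a ` K} = K"
    using inj_on_image_mem_iff[OF inj_on_j[OF a] _ KY] KY by auto
  have "j a ` K \<subseteq> topspace (Sp X a)"
    using KY is_dmap_in[OF j_dmap a] by blast
  then show ?thesis
  proof (rule closedin_pushoutI[OF a])
    show "closedin (Sp Y a) {y \<in> topspace (Sp Y a). j a y \<in> j a ` K}"
      unfolding pre_j by (rule K)
  qed (rule pre_\<Phi>)
qed

lemma closedin_image_\<Phi>_slice: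
  assumes a: "a \<in> Ob C" and w: "w \<in> disc_set i - sphere_set i" and K: "closedin (Sp A a) K"
  shows "closedin (Sp X a) (\<Phi> a ` ({w} \<times> K))"
proof -
  have slice: "{w} \<times> K \<subseteq> (disc_set i - sphere_set i) \<times> topspace (Sp A a)"
    using w closedin_subset[OF K] by auto
  obtain \<phi> where \<phi>: "is_dmap C (bdry_dsp i A) Y \<phi>"
    and \<Phi>\<phi>: "\<And>p. p \<in> sphere_set i \<times> topspace (Sp A a) \<Longrightarrow> \<Phi> a p = j a (\<phi> a p)"
    using obtain_attaching_map a by metis
  have pre_j: "{y \<in> topspace (Sp Y a). j a y \<in> \<Phi> a ` ({w} \<times> K)} = {}"
    using j_\<Phi>_disjoint[OF a] slice by blast
  have pre_\<Phi>: "{p \<in> topspace (Sp (cell_dsp i A) a). \<Phi> a p \<in> \<Phi> a ` ({w} \<times> K)} = {w} \<times> K"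
  proof (intro set_eqI iffI)
    fix p assume p: "p \<in> {p \<in> topspace (Sp (cell_dsp i A) a). \<Phi> a p \<in> \<Phi> a ` ({w} \<times> K)}"
    show "p \<in> {w} \<times> K"
    proof (cases "p \<in> sphere_set i \<times> topspace (Sp A a)")
      case True
      then have "\<Phi> a p \<in> j a ` topspace (Sp Y a)"
        using \<Phi>\<phi> is_dmap_in[OF \<phi> a] by simp
      then show ?thesis
        using p slice j_\<Phi>_disjoint[OF a] by blast
    next
      case False
      obtain b where b: "b \<in> K" "\<Phi> a p = \<Phi> a (w, b)"
        using p by blast
      have "p \<in> (disc_set i - sphere_set i) \<times> topspace (Sp A a)"
        using False p by auto
      then have "p = (w, b)"
        using inj_onD[OF inj_on_\<Phi>[OF a] b(2)] slice b(1) by blast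
      then show ?thesis
        using b(1) by simp
    qed
  qed (use slice in auto)
  have "\<Phi> a ` ({w} \<times> K) \<subseteq> topspace (Sp X a)"
    using slice is_dmap_in[OF \<Phi>_dmap a] by auto
  then show ?thesis
  proof (rule closedin_pushoutI[OF a])
    show "closedin (Sp Y a) {y \<in> topspace (Sp Y a). j a y \<in> \<Phi> a ` ({w} \<times> K)}"
      unfolding pre_j by simp
    show "closedin (Sp (cell_dsp i A) a) {p \<in> topspace (Sp (cell_dsp i A) a). \<Phi> a p \<in> \<Phi> a ` ({w} \<times> K)}"
      unfolding pre_\<Phi> using closedin_cell_dsp_slice[OF _ K] w by simp
  qed
qed

end

section \<open>Sequential colimits\<close>

primrec iter_bond :: "(nat \<Rightarrow> 'o \<Rightarrow> 'b \<Rightarrow> 'b) \<Rightarrow> 'o \<Rightarrow> nat \<Rightarrow> nat \<Rightarrow> 'b \<Rightarrow> 'b" where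
  "iter_bond js a m 0 y = y"
| "iter_bond js a m (Suc d) y = js (m + d) a (iter_bond js a m d y)"

locale seq_colim =
  fixes C :: "('o, 'm) cat" and Xs :: "nat \<Rightarrow> ('o, 'm, 'b) dsp"
    and js :: "nat \<Rightarrow> 'o \<Rightarrow> 'b \<Rightarrow> 'b" and X :: "('o, 'm, 'a) dsp"
    and \<iota>s :: "nat \<Rightarrow> 'o \<Rightarrow> 'b \<Rightarrow> 'a"
  assumes seq_colim: "is_seq_colim C Xs js X \<iota>s"
    and bond_dmap: "\<And>i. is_dmap C (Xs i) (Xs (Suc i)) (js i)"
begin

lemma \<iota>_dmap: "is_dmap C (Xs i) X (\<iota>s i)"
  and \<iota>_bond: "a \<in> Ob C \<Longrightarrow> x \<in> topspace (Sp (Xs i) a) \<Longrightarrow> \<iota>s (Suc i) a (js i a x) = \<iota>s i a x"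
  and inj_on_\<iota>: "a \<in> Ob C \<Longrightarrow> inj_on (\<iota>s i a) (topspace (Sp (Xs i) a))"
  and topspace_colim: "a \<in> Ob C \<Longrightarrow> topspace (Sp X a) = (\<Union>i. \<iota>s i a ` topspace (Sp (Xs i) a))"
  and openin_colim_iff: "a \<in> Ob C \<Longrightarrow> U \<subseteq> topspace (Sp X a) \<Longrightarrow> openin (Sp X a) U \<longleftrightarrow>
    (\<forall>i. openin (Sp (Xs i) a) {x \<in> topspace (Sp (Xs i) a). \<iota>s i a x \<in> U})"
  using seq_colim unfolding is_seq_colim_def by simp_all

lemma closedin_colimI:
  assumes a: "a \<in> Ob C" and K: "K \<subseteq> topspace (Sp X a)"
    and closed: "\<And>i. closedin (Sp (Xs i) a) {x \<in> topspace (Sp (Xs i) a). \<iota>s i a x \<in> K}"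
  shows "closedin (Sp X a) K"
proof -
  have "{x \<in> topspace (Sp (Xs i) a). \<iota>s i a x \<in> topspace (Sp X a) - K}
      = topspace (Sp (Xs i) a) - {x \<in> topspace (Sp (Xs i) a). \<iota>s i a x \<in> K}" for i
    using is_dmap_in[OF \<iota>_dmap a] by auto
  then have "openin (Sp X a) (topspace (Sp X a) - K)"
    using openin_colim_iff[OF a] closed unfolding closedin_def by auto
  then show ?thesis
    using K unfolding closedin_def by blast
qed

lemma iter_bond_in:
  "a \<in> Ob C \<Longrightarrow> y \<in> topspace (Sp (Xs m) a) \<Longrightarrow> iter_bond js a m d y \<in> topspace (Sp (Xs (m + d)) a)"
  by (induction d) (simp_all add: is_dmap_in[OF bond_dmap])

lemma \<iota>_iter_bond:
  "a \<in> Ob C \<Longrightarrow> y \<in> topspace (Sp (Xs m) a) \<Longrightarrow> \<iota>s (m + d) a (iter_bond js a m d y) = \<iota>s m a y"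
  by (induction d) (simp_all add: \<iota>_bond iter_bond_in)

lemma \<iota>_eq_\<iota>_iff:
  assumes "a \<in> Ob C" "x \<in> topspace (Sp (Xs m) a)" "y \<in> topspace (Sp (Xs (m + d)) a)"
  shows "\<iota>s m a x = \<iota>s (m + d) a y \<longleftrightarrow> iter_bond js a m d x = y"
  using assms \<iota>_iter_bond iter_bond_in inj_on_\<iota> by (metis inj_on_def)

lemma continuous_map_iter_bond:
  assumes "a \<in> Ob C"
  shows "continuous_map (Sp (Xs m) a) (Sp (Xs (m + d)) a) (iter_bond js a m d)"
proof (induction d)
  case 0
  have "iter_bond js a m 0 = id"
    by (simp add: fun_eq_iff)
  then show ?case
    by simp
next
  case (Suc d)
  have "iter_bond js a m (Suc d) = js (m + d) a \<circ> iter_bond js a m d"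
    by (simp add: fun_eq_iff)
  then show ?case
    using continuous_map_compose[OF Suc.IH is_dmap_continuous[OF bond_dmap assms]] by (simp add: o_def)
qed

context
  fixes a
  assumes a: "a \<in> Ob C"
    and bond_closed: "\<And>i K. closedin (Sp (Xs i) a) K \<Longrightarrow> closedin (Sp (Xs (Suc i)) a) (js i a ` K)"
begin

lemma closedin_image_iter_bond:
  "closedin (Sp (Xs m) a) K \<Longrightarrow> closedin (Sp (Xs (m + d)) a) (iter_bond js a m d ` K)"
proof (induction d)
  case (Suc d)
  then show ?case
    using bond_closed[OF Suc.IH[OF Suc.prems]] by (simp add: image_image)
qed simp

lemma closedin_image_\<iota>:
  assumes K: "closedin (Sp (Xs n) a) K"
  shows "closedin (Sp X a) (\<iota>s n a ` K)"
proof (rule closedin_colimI[OF a])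
  have KX: "K \<subseteq> topspace (Sp (Xs n) a)"
    using closedin_subset[OF K] .
  then show "\<iota>s n a ` K \<subseteq> topspace (Sp X a)"
    using is_dmap_in[OF \<iota>_dmap a] by blast
  fix l
  show "closedin (Sp (Xs l) a) {x \<in> topspace (Sp (Xs l) a). \<iota>s l a x \<in> \<iota>s n a ` K}"
  proof (cases "l \<le> n")
    case True
    then obtain d where n: "n = l + d"
      using le_Suc_ex by blast
    then have "{x \<in> topspace (Sp (Xs l) a). \<iota>s l a x \<in> \<iota>s n a ` K}
        = {x \<in> topspace (Sp (Xs l) a). iter_bond js a l d x \<in> K}"
      using \<iota>_eq_\<iota>_iff[OF a] KX by fastforce
    moreover have "closedin (Sp (Xs (l + d)) a) K"
      using K n by simp
    ultimately show ?thesis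
      using closedin_continuous_map_preimage[OF continuous_map_iter_bond[OF a]] by simp
  next
    case False
    then obtain d where l: "l = n + d"
      by (metis le_Suc_ex nat_le_linear)
    have "{x \<in> topspace (Sp (Xs l) a). \<iota>s l a x \<in> \<iota>s n a ` K} = iter_bond js a n d ` K"
    proof (intro set_eqI iffI)
      fix x assume "x \<in> {x \<in> topspace (Sp (Xs l) a). \<iota>s l a x \<in> \<iota>s n a ` K}"
      then obtain y where "y \<in> K" "\<iota>s n a y = \<iota>s (n + d) a x" "x \<in> topspace (Sp (Xs (n + d)) a)"
        using l by auto
      then show "x \<in> iter_bond js a n d ` K"
        using \<iota>_eq_\<iota>_iff[OF a] KX by blast
    next
      fix x assume "x \<in> iter_bond js a n d ` K"
      then obtain y where "y \<in> K" "x = iter_bond js a n d y"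
        by blast
      moreover have "y \<in> topspace (Sp (Xs n) a)"
        using \<open>y \<in> K\<close> KX by blast
      ultimately show "x \<in> {x \<in> topspace (Sp (Xs l) a). \<iota>s l a x \<in> \<iota>s n a ` K}"
        using \<iota>_iter_bond[OF a] iter_bond_in[OF a] l \<open>y \<in> K\<close> by auto
    qed
    then show ?thesis
      using closedin_image_iter_bond[OF K] l by simp
  qed
qed

end

end

section \<open>D-CW complexes\<close>

locale dcw =
  fixes C :: "('o, 'm) cat" and F :: "('o, 'm, 'e) dsp set" and X :: "('o, 'm, 'a) dsp"
    and Xs :: "nat \<Rightarrow> ('o, 'm, 'b) dsp" and js :: "nat \<Rightarrow> 'o \<Rightarrow> 'b \<Rightarrow> 'b"
    and As :: "nat \<Rightarrow> ('o, 'm, 'c) dsp" and \<Phi>s :: "nat \<Rightarrow> 'o \<Rightarrow> (nat \<Rightarrow> real) \<times> 'c \<Rightarrow> 'b"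
    and \<iota>s :: "nat \<Rightarrow> 'o \<Rightarrow> 'b \<Rightarrow> 'a"
  assumes cat: "is_category C" and dcw: "dcw_structure C F X Xs js As \<Phi>s \<iota>s"
begin

lemma is_dspace_As: "is_dspace C (As i)"
  and orbit_coproduct_As: "is_orbit_coproduct C F (As i)"
  and pushout_stage: "cell_pushout C i (As i) (Xs i) (Xs (Suc i)) (js i) (\<Phi>s i)"
  and empty_start: "a \<in> Ob C \<Longrightarrow> topspace (Sp (Xs 0) a) = {}"
  using dcw unfolding dcw_structure_def cw_structure_def cell_pushout_def by blast+

sublocale seq_colim C Xs js X \<iota>s
  using dcw cell_pushout.j_dmap[OF pushout_stage]
  unfolding dcw_structure_def cw_structure_def by unfold_locales blast+

definition cell_slice :: "nat \<Rightarrow> (nat \<Rightarrow> real) \<Rightarrow> 'o \<Rightarrow> 'c \<Rightarrow> 'a" where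
  "cell_slice k w b z = \<iota>s (Suc k) b (\<Phi>s k b (w, z))"

lemma is_dmap_cell_slice:
  assumes "w \<in> disc_set k"
  shows "is_dmap C (As k) X (cell_slice k w)"
  unfolding cell_slice_def[abs_def]
  by (intro is_dmap_comp[OF cat _ \<iota>_dmap] is_dmap_comp[OF cat is_dmap_cell_dsp_slice[OF assms]]
      cell_pushout.\<Phi>_dmap[OF pushout_stage])

lemma cell_slice_in:
  "w \<in> disc_set k \<Longrightarrow> b \<in> Ob C \<Longrightarrow> z \<in> topspace (Sp (As k) b) \<Longrightarrow> cell_slice k w b z \<in> topspace (Sp X b)"
  using is_dmap_in[OF is_dmap_cell_slice] .

lemma exists_open_cell_stage:
  "a \<in> Ob C \<Longrightarrow> y \<in> topspace (Sp (Xs n) a) \<Longrightarrow> \<exists>k w z. w \<in> disc_set k - sphere_set k \<and>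
    z \<in> topspace (Sp (As k) a) \<and> \<iota>s n a y = cell_slice k w a z"
proof (induction n arbitrary: y)
  case 0
  then show ?case
    using empty_start by simp
next
  case (Suc n)
  then consider y' where "y' \<in> topspace (Sp (Xs n) a)" "y = js n a y'"
    | w z where "w \<in> disc_set n - sphere_set n" "z \<in> topspace (Sp (As n) a)" "y = \<Phi>s n a (w, z)"
    using cell_pushout.topspace_pushout[OF pushout_stage] by blast
  then show ?case
  proof cases
    case 1
    then show ?thesis
      using Suc.IH[OF Suc.prems(1)] \<iota>_bond[OF Suc.prems(1)] by metis
  next
    case 2
    then show ?thesis
      unfolding cell_slice_def by blast
  qed
qed

lemma exists_open_cell:
  assumes "a \<in> Ob C" "x \<in> topspace (Sp X a)"
  obtains k w z where "w \<in> disc_set k - sphere_set k" "z \<in> topspace (Sp (As k) a)"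
    "x = cell_slice k w a z"
proof -
  obtain n y where "y \<in> topspace (Sp (Xs n) a)" "x = \<iota>s n a y"
    using assms topspace_colim by blast
  then show ?thesis
    using exists_open_cell_stage[OF assms(1)] that by metis
qed

lemma cell_slice_neq_later:
  assumes a: "a \<in> Ob C" and "i < k"
    and w: "w \<in> disc_set i - sphere_set i" "u \<in> topspace (Sp (As i) a)"
    and w': "w' \<in> disc_set k - sphere_set k" "u' \<in> topspace (Sp (As k) a)"
  shows "cell_slice i w a u \<noteq> cell_slice k w' a u'"
proof
  assume eq: "cell_slice i w a u = cell_slice k w' a u'"
  obtain d where k: "k = Suc i + d"
    using \<open>i < k\<close> less_imp_Suc_add by blast
  let ?y = "\<Phi>s i a (w, u)"
  have y: "?y \<in> topspace (Sp (Xs (Suc i)) a)"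
    using is_dmap_in[OF cell_pushout.\<Phi>_dmap[OF pushout_stage] a] w by simp
  have \<Phi>_in: "\<Phi>s k a (w', u') \<in> topspace (Sp (Xs (Suc i + Suc d)) a)"
    using is_dmap_in[OF cell_pushout.\<Phi>_dmap[OF pushout_stage] a] w' k by simp
  have "\<iota>s (Suc i) a ?y = \<iota>s (Suc i + Suc d) a (\<Phi>s k a (w', u'))"
    using eq k unfolding cell_slice_def by simp
  then have "iter_bond js a (Suc i) (Suc d) ?y = \<Phi>s k a (w', u')"
    using \<iota>_eq_\<iota>_iff[OF a y \<Phi>_in] by blast
  moreover have "iter_bond js a (Suc i) (Suc d) ?y \<in> js k a ` topspace (Sp (Xs k) a)"
    using iter_bond_in[OF a y, of d] k by simp
  ultimately show False
    using cell_pushout.j_\<Phi>_disjoint[OF pushout_stage a] w' by blast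
qed

lemma cell_slice_eq_iff:
  assumes a: "a \<in> Ob C"
    and w: "w \<in> disc_set i - sphere_set i" "u \<in> topspace (Sp (As i) a)"
    and w': "w' \<in> disc_set k - sphere_set k" "u' \<in> topspace (Sp (As k) a)"
  shows "cell_slice i w a u = cell_slice k w' a u' \<longleftrightarrow> i = k \<and> w = w' \<and> u = u'"
proof
  assume eq: "cell_slice i w a u = cell_slice k w' a u'"
  then have ik: "i = k"
    using cell_slice_neq_later[OF a _ w w'] cell_slice_neq_later[OF a _ w' w]
    by (metis linorder_neqE_nat)
  have "\<Phi>s i a (w, u) = \<Phi>s i a (w', u')"
    using eq ik inj_onD[OF inj_on_\<iota>[OF a]] is_dmap_in[OF cell_pushout.\<Phi>_dmap[OF pushout_stage] a] w w'
    unfolding cell_slice_def by simp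
  then show "i = k \<and> w = w' \<and> u = u'"
    using inj_onD[OF cell_pushout.inj_on_\<Phi>[OF pushout_stage a]] ik w w' by blast
qed simp

lemma closed_map_cell_slice:
  assumes a: "a \<in> Ob C" and w: "w \<in> disc_set k - sphere_set k"
  shows "closed_map (Sp (As k) a) (Sp X a) (cell_slice k w a)"
  unfolding closed_map_def
proof (intro allI impI)
  fix K assume "closedin (Sp (As k) a) K"
  then have "closedin (Sp X a) (\<iota>s (Suc k) a ` \<Phi>s k a ` ({w} \<times> K))"
    using closedin_image_\<iota>[OF a cell_pushout.closedin_image_j[OF pushout_stage a]]
      cell_pushout.closedin_image_\<Phi>_slice[OF pushout_stage a w] by blast
  moreover have "\<iota>s (Suc k) a ` \<Phi>s k a ` ({w} \<times> K) = cell_slice k w a ` K"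
    unfolding cell_slice_def by auto
  ultimately show "closedin (Sp X a) (cell_slice k w a ` K)"
    by simp
qed

lemma cell_slice_preimage:
  assumes f: "f \<in> Ar C" and y: "y \<in> topspace (Sp X (cdom C f))"
    and w: "w \<in> disc_set k - sphere_set k" and z: "z \<in> topspace (Sp (As k) (ccod C f))"
    and eq: "Mp X f y = cell_slice k w (ccod C f) z"
  obtains u where "u \<in> topspace (Sp (As k) (cdom C f))" "y = cell_slice k w (cdom C f) u"
    "Mp (As k) f u = z"
proof -
  note ob = is_category_dom_cod[OF cat f]
  obtain m w' u where w': "w' \<in> disc_set m - sphere_set m" and u: "u \<in> topspace (Sp (As m) (cdom C f))"
    and yu: "y = cell_slice m w' (cdom C f) u"
    using exists_open_cell[OF ob(1) y] .
  have "cell_slice m w' (ccod C f) (Mp (As m) f u) = cell_slice k w (ccod C f) z"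
    using is_dmap_natural[OF is_dmap_cell_slice f u] w' yu eq by simp
  then have "m = k \<and> w' = w \<and> Mp (As m) f u = z"
    using cell_slice_eq_iff[OF ob(2) w' is_dspace_Mp_in[OF is_dspace_As f u] w z] by blast
  then show ?thesis
    using that[of u] u yu by auto
qed

context
  fixes a k w z q
  assumes a: "a \<in> Ob C" and w: "w \<in> disc_set k - sphere_set k"
    and z: "z \<in> topspace (Sp (As k) a)" "z \<in> q"
    and q_inv: "\<And>f u. f \<in> Ar C \<Longrightarrow> u \<in> topspace (Sp (As k) (cdom C f)) \<Longrightarrow> Mp (As k) f u \<in> q \<longleftrightarrow> u \<in> q"
begin

lemma colim_rel_cell_slice_imp:
  assumes "colim_rel C X (a, cell_slice k w a z) (b, y)"
  shows "b \<in> Ob C \<and> y \<in> cell_slice k w b ` (topspace (Sp (As k) b) \<inter> q)"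
  using assms unfolding colim_rel_def
proof (induction rule: rtranclp_induct2)
  case refl
  then show ?case
    using a z by blast
next
  case (step b y b' y')
  then obtain u where u: "u \<in> topspace (Sp (As k) b)" "u \<in> q" and yu: "y = cell_slice k w b u"
    by blast
  from step.hyps(2) show ?case
  proof
    assume "colim_step C X (b, y) (b', y')"
    then obtain f where f: "f \<in> Ar C" "b = cdom C f" "b' = ccod C f" "y' = Mp X f y"
      unfolding colim_step_def by blast
    then have "y' = cell_slice k w b' (Mp (As k) f u)"
      using is_dmap_natural[OF is_dmap_cell_slice] w u yu by simp
    then show ?thesis
      using f is_category_dom_cod[OF cat] is_dspace_Mp_in[OF is_dspace_As] q_inv u by blast
  next
    assume "colim_step C X (b', y') (b, y)"
    then obtain f where f: "f \<in> Ar C" "b' = cdom C f" "b = ccod C f"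
      and y': "y' \<in> topspace (Sp X b')" "y = Mp X f y'"
      unfolding colim_step_def by blast
    obtain u' where "u' \<in> topspace (Sp (As k) b')" "y' = cell_slice k w b' u'" "Mp (As k) f u' = u"
      using cell_slice_preimage[OF f(1) _ w] f y' u yu by metis
    then show ?thesis
      using f q_inv u is_category_dom_cod[OF cat] by blast
  qed
qed

context
  fixes Orb
  assumes orb: "is_dorbit C Orb" "dspace_iso C (sub_dsp (As k) q) Orb"
begin

lemma colim_class_cell_slice:
  "(b, y) \<in> colim_class C X (a, cell_slice k w a z) \<longleftrightarrow>
    b \<in> Ob C \<and> y \<in> cell_slice k w b ` (topspace (Sp (As k) b) \<inter> q)"
proof
  assume "(b, y) \<in> colim_class C X (a, cell_slice k w a z)"
  then show "b \<in> Ob C \<and> y \<in> cell_slice k w b ` (topspace (Sp (As k) b) \<inter> q)"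
    using colim_rel_cell_slice_imp[of b y] unfolding colim_class_def by blast
next
  assume "b \<in> Ob C \<and> y \<in> cell_slice k w b ` (topspace (Sp (As k) b) \<inter> q)"
  then obtain u where b: "b \<in> Ob C" and u: "u \<in> topspace (Sp (As k) b)" "u \<in> q"
    and yu: "y = cell_slice k w b u"
    by blast
  have "colim_rel C (sub_dsp (As k) q) (a, z) (b, u)"
    using colim_rel_if_iso_dorbit[OF cat orb] a z b u by (simp add: colim_carrier_def sub_dsp_def)
  from colim_rel_dmap[OF cat is_dmap_sub_dsp[OF is_dmap_cell_slice] this]
  show "(b, y) \<in> colim_class C X (a, cell_slice k w a z)"
    using w b u yu cell_slice_in unfolding colim_class_def colim_carrier_def by simp
qed

lemma Sp_orbit_at_cell_slice:
  assumes "b \<in> Ob C"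
  shows "Sp (orbit_at C X (colim_class C X (a, cell_slice k w a z))) b
    = subtopology (Sp X b) (cell_slice k w b ` (topspace (Sp (As k) b) \<inter> q))"
  using colim_class_cell_slice assms by (simp add: orbit_at_def)

lemma is_dmap_cell_slice_orbit_at:
  "is_dmap C (sub_dsp (As k) q) (orbit_at C X (colim_class C X (a, cell_slice k w a z))) (cell_slice k w)"
  unfolding is_dmap_def
proof (intro conjI ballI)
  fix b assume b: "b \<in> Ob C"
  show "continuous_map (Sp (sub_dsp (As k) q) b)
      (Sp (orbit_at C X (colim_class C X (a, cell_slice k w a z))) b) (cell_slice k w b)"
    unfolding Sp_orbit_at_cell_slice[OF b]
    using is_dmap_continuous[OF is_dmap_sub_dsp[OF is_dmap_cell_slice] b] w
    by (intro continuous_map_into_subtopology) (auto simp: sub_dsp_def)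
qed (use is_dmap_natural[OF is_dmap_cell_slice] w in \<open>simp add: sub_dsp_def orbit_at_def\<close>)

lemma homeomorphic_map_cell_slice_orbit_at:
  assumes b: "b \<in> Ob C"
  shows "homeomorphic_map (Sp (sub_dsp (As k) q) b)
    (Sp (orbit_at C X (colim_class C X (a, cell_slice k w a z))) b) (cell_slice k w b)"
proof (rule bijective_closed_imp_homeomorphic_map)
  show "continuous_map (Sp (sub_dsp (As k) q) b)
      (Sp (orbit_at C X (colim_class C X (a, cell_slice k w a z))) b) (cell_slice k w b)"
    using is_dmap_continuous[OF is_dmap_cell_slice_orbit_at b] .
  have inj: "inj_on (cell_slice k w b) (topspace (Sp (As k) b))"
    using cell_slice_eq_iff[OF b w _ w] by (auto intro: inj_onI)
  then show "inj_on (cell_slice k w b) (topspace (Sp (sub_dsp (As k) q) b))"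
    by (simp add: sub_dsp_def inj_on_Int)
  have "{u \<in> topspace (Sp (As k) b). cell_slice k w b u \<in> cell_slice k w b ` (topspace (Sp (As k) b) \<inter> q)}
      = topspace (Sp (As k) b) \<inter> q"
    using inj by (auto simp: inj_on_def)
  from closed_map_restriction[OF closed_map_cell_slice[OF b w] this]
  show "closed_map (Sp (sub_dsp (As k) q) b)
      (Sp (orbit_at C X (colim_class C X (a, cell_slice k w a z))) b) (cell_slice k w b)"
    unfolding Sp_orbit_at_cell_slice[OF b] sub_dsp_def by (metis dsp.select_convs(1) subtopology_restrict)
  show "cell_slice k w b ` topspace (Sp (sub_dsp (As k) q) b)
      = topspace (Sp (orbit_at C X (colim_class C X (a, cell_slice k w a z))) b)"
    using Sp_orbit_at_cell_slice[OF b] cell_slice_in[OF _ b] w by (auto simp: sub_dsp_def)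
qed

lemma orbit_at_cell_slice_iso:
  "dspace_iso C (orbit_at C X (colim_class C X (a, cell_slice k w a z))) (sub_dsp (As k) q)"
proof (rule dspace_iso_if_homeomorphic_map[OF cat _ is_dmap_cell_slice_orbit_at])
  show "is_dspace C (sub_dsp (As k) q)"
    using is_dspace_sub_dsp[OF is_dspace_As] q_inv by blast
qed (use homeomorphic_map_cell_slice_orbit_at in blast)

end

end

end

theorem proposition6p4:
  fixes C :: "('o, 'm) cat"
    and F :: "('o, 'm, 'e) dsp set"
    and X :: "('o, 'm, 'a) dsp"
    and Xs :: "nat \<Rightarrow> ('o, 'm, 'b) dsp"
    and js :: "nat \<Rightarrow> 'o \<Rightarrow> 'b \<Rightarrow> 'b"
    and As :: "nat \<Rightarrow> ('o, 'm, 'c) dsp"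
    and \<Phi>s :: "nat \<Rightarrow> 'o \<Rightarrow> (nat \<Rightarrow> real) \<times> 'c \<Rightarrow> 'b"
    and \<iota>s :: "nat \<Rightarrow> 'o \<Rightarrow> 'b \<Rightarrow> 'a"
  assumes "is_category C"
    and "\<forall>Orb\<in>F. is_dorbit C Orb"
    and "is_dspace C X"
    and "dcw_structure C F X Xs js As \<Phi>s \<iota>s"
  shows "of_type C F X"
  unfolding of_type_def
proof
  interpret dcw C F X Xs js As \<Phi>s \<iota>s
    using assms(1,4) by unfold_locales
  fix c assume "c \<in> colim_points C X"
  then obtain a x where a: "a \<in> Ob C" and x: "x \<in> topspace (Sp X a)"
    and c: "c = colim_class C X (a, x)"
    unfolding colim_points_def colim_carrier_def by auto
  obtain k w z where w: "w \<in> disc_set k - sphere_set k" and z: "z \<in> topspace (Sp (As k) a)"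
    and xz: "x = cell_slice k w a z"
    using exists_open_cell[OF a x] .
  obtain q Orb where q: "z \<in> q" "Orb \<in> F" "dspace_iso C (sub_dsp (As k) q) Orb"
    "\<And>f u. f \<in> Ar C \<Longrightarrow> u \<in> topspace (Sp (As k) (cdom C f)) \<Longrightarrow> Mp (As k) f u \<in> q \<longleftrightarrow> u \<in> q"
    using orbit_coproduct_component[OF cat orbit_coproduct_As a z] by blast
  have "dspace_iso C (orbit_at C X c) (sub_dsp (As k) q)"
    using orbit_at_cell_slice_iso[OF a w z q(1) q(4) _ q(3)] assms(2) q(2) c xz by blast
  then show "\<exists>Orb\<in>F. dspace_iso C (orbit_at C X c) Orb"
    using dspace_iso_trans[OF cat _ q(3)] q(2) by blast
qed

end
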